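(* Let $\mathcal I=(i_-,i_+)\subseteq\mathbb R$ and let $P,Q$ be smooth functions on $\mathcal I$ with $P\ge 0$. Assume $Q$ is strictly increasing on $\mathcal I$ with $Q'(x)>0$ for all $x\in\mathcal I$, and $$\lim_{x\to i_-}Q(x)<0,\qquad \lim_{x\to i_+}Q(x)>0 .$$ Let $f_\infty$ be a probability density on $\mathcal I$ satisfying $$\frac{d}{dx}\big(P(x)f_\infty(x)\big)+Q(x)f_\infty(x)=0,\qquad x\in\mathcal I,$$ and let $X$ be a random variable with density $f_\infty$. Define $w(x)=P(x)/Q'(x)$ for $x\in\mathcal I$. Then for every smooth function $\phi$ on $\mathcal I$ such that $\phi(X)$ has finite variance, $$\int_{\mathcal I}\phi^2 f_\infty\,dx-\Big(\int_{\mathcal I}\phi f_\infty\,dx\Big)^2\le \int_{\mathcal I} w(x)\,(\phi'(x))^2 f_\infty(x)\,dx,$$ i.e. $\mathrm{Var}[\phi(X)]\le E\{w(X)[\phi'(X)]^2\}$ (meaning: whenever the right-hand side is finite, the inequality holds).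
   Context: $\mathrm{Var}[\phi(X)]=E[\phi(X)^2]-(E[\phi(X)])^2$. The differential relation for $f_\infty$ expresses that $f_\infty$ is a stationary solution of the Fokker–Planck equation $\partial_t f=\partial_x^2(Pf)+\partial_x(Qf)$ on $\mathcal I$. *)

theory Defs
  imports "HOL-Analysis.Analysis"
begin

definition ointerval :: "ereal \<Rightarrow> ereal \<Rightarrow> real set" where
  "ointerval a b = {x. a < ereal x \<and> ereal x < b}"

definition left_end :: "ereal \<Rightarrow> real filter" where
  "left_end a = (if a = -\<infinity> then at_bot else at_right (real_of_ereal a))"

definition right_end :: "ereal \<Rightarrow> real filter" where
  "right_end b = (if b = \<infinity> then at_top else at_left (real_of_ereal b))"

definition smooth_on :: "real set \<Rightarrow> (real \<Rightarrow> real) \<Rightarrow> bool" where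
  "smooth_on S f \<longleftrightarrow> (\<forall>n. \<forall>x\<in>S. ((deriv ^^ n) f) differentiable (at x))"

end

theory Submission
  imports Defs
begin

text \<open>
  Let \<open>z\<close> be the zero of \<open>Q\<close> and \<open>\<psi> = \<phi> - \<phi> z\<close>. Completing the square and using the
  stationarity relation \<open>(P f)' = - Q f\<close> gives the pointwise bound
  \<open>\<psi>\<^sup>2 f \<le> w \<phi>'\<^sup>2 f - K'\<close> with \<open>K = \<psi>\<^sup>2 P f / Q\<close>, which is continuous also at \<open>z\<close>.
  On a compact interval \<open>[l, u]\<close> around \<open>z\<close> the boundary term \<open>K u - K l\<close> is nonnegative
  because \<open>Q\<close> changes sign at \<open>z\<close>; monotone convergence extends the bound
  \<open>E (\<phi> X - \<phi> z)\<^sup>2 \<le> E (w X \<phi>' X\<^sup>2)\<close> to the whole interval, and the variance is at most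
  the second moment about any constant.
\<close>

lemma weighted_square_completion:
  fixes s d q v w :: real
  assumes "0 \<le> s" "0 < d"
  shows "2 * v * w * s / q - v\<^sup>2 * s * d / q\<^sup>2 \<le> s / d * w\<^sup>2"
proof (cases "q = 0")
  case True
  then show ?thesis using assms by simp
next
  case False
  have "0 \<le> s / d * (w - v * d / q)\<^sup>2" using assms by simp
  also have "\<dots> = s / d * w\<^sup>2 - (2 * v * w * s / q - v\<^sup>2 * s * d / q\<^sup>2)"
    using assms False by (simp add: field_simps power2_eq_square)
  finally show ?thesis by simp
qed

lemma set_integrable_nn_set_integral_eq:
  fixes u :: "'a \<Rightarrow> real"
  assumes "set_integrable M A u" "A \<in> sets M" "\<And>x. x \<in> A \<Longrightarrow> 0 \<le> u x"
  shows "(\<integral>\<^sup>+x\<in>A. ennreal (u x) \<partial>M) = ennreal (LINT x:A|M. u x)"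
proof -
  have "AE x in M. 0 \<le> u x * indicator A x"
    using assms(3) by (auto simp: indicator_def)
  then show ?thesis
    unfolding set_lebesgue_integral_def nn_integral_set_ennreal using assms
    by (subst nn_integral_eq_integral) (simp_all add: mult_ac set_integrable_def)
qed

lemma set_integrable_mult_of_square:
  fixes g f :: "'a \<Rightarrow> real"
  assumes "set_borel_measurable M A g" "set_integrable M A f"
    and "set_integrable M A (\<lambda>x. (g x)\<^sup>2 * f x)" "\<And>x. x \<in> A \<Longrightarrow> 0 \<le> f x"
  shows "set_integrable M A (\<lambda>x. g x * f x)"
proof (rule set_integrable_bound)
  show "set_integrable M A (\<lambda>x. (g x)\<^sup>2 * f x + f x)"
    using assms(3,2) by (rule set_integral_add(1))
  have "(\<lambda>x. (indicator A x *\<^sub>R g x) * (indicator A x *\<^sub>R f x)) \<in> borel_measurable M"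
    using assms(1,2) unfolding set_borel_measurable_def set_integrable_def by measurable
  moreover have "(\<lambda>x. (indicator A x *\<^sub>R g x) * (indicator A x *\<^sub>R f x))
      = (\<lambda>x. indicator A x *\<^sub>R (g x * f x))"
    by (auto simp: indicator_def fun_eq_iff)
  ultimately show "set_borel_measurable M A (\<lambda>x. g x * f x)"
    unfolding set_borel_measurable_def by simp
  show "AE x in M. x \<in> A \<longrightarrow> norm (g x * f x) \<le> norm ((g x)\<^sup>2 * f x + f x)"
  proof (intro AE_I2 impI)
    fix x assume "x \<in> A"
    then have f0: "0 \<le> f x" by (rule assms(4))
    have "0 \<le> (\<bar>g x\<bar> - 1)\<^sup>2" by simp
    then have "\<bar>g x\<bar> \<le> (g x)\<^sup>2 + 1"
      using abs_ge_zero[of "g x"] by (simp add: power2_diff power2_abs)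
    then have "norm (g x * f x) \<le> ((g x)\<^sup>2 + 1) * f x"
      using f0 by (simp add: abs_mult mult_right_mono)
    also have "\<dots> = norm ((g x)\<^sup>2 * f x + f x)"
      using f0 by (simp add: algebra_simps)
    finally show "norm (g x * f x) \<le> norm ((g x)\<^sup>2 * f x + f x)" .
  qed
qed

lemma set_integral_variance_le_moment:
  fixes g f :: "'a \<Rightarrow> real" and c :: real
  assumes "set_integrable M A f" "(LINT x:A|M. f x) = 1"
    and "set_integrable M A (\<lambda>x. (g x)\<^sup>2 * f x)" "set_integrable M A (\<lambda>x. g x * f x)"
  shows "set_integrable M A (\<lambda>x. (g x - c)\<^sup>2 * f x)"
    and "(LINT x:A|M. (g x)\<^sup>2 * f x) - (LINT x:A|M. g x * f x)\<^sup>2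
           \<le> (LINT x:A|M. (g x - c)\<^sup>2 * f x)"
proof -
  have expand: "(\<lambda>x. (g x - c)\<^sup>2 * f x) = (\<lambda>x. ((g x)\<^sup>2 * f x - (2 * c) * (g x * f x)) + c\<^sup>2 * f x)"
    by (auto simp: fun_eq_iff power2_eq_square algebra_simps)
  show "set_integrable M A (\<lambda>x. (g x - c)\<^sup>2 * f x)"
    unfolding expand using assms by (intro set_integral_add set_integral_diff set_integrable_mult_right)
  have "(LINT x:A|M. (g x - c)\<^sup>2 * f x)
      = (LINT x:A|M. (g x)\<^sup>2 * f x) - 2 * c * (LINT x:A|M. g x * f x) + c\<^sup>2"
    unfolding expand using assms
    by (simp add: set_integral_add set_integral_diff set_integrable_mult_right)
  moreover have "0 \<le> ((LINT x:A|M. g x * f x) - c)\<^sup>2" by simp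
  ultimately show "(LINT x:A|M. (g x)\<^sup>2 * f x) - (LINT x:A|M. g x * f x)\<^sup>2
           \<le> (LINT x:A|M. (g x - c)\<^sup>2 * f x)"
    by (simp add: power2_eq_square algebra_simps)
qed

lemma set_integrable_continuous_mult_Icc:
  fixes h f :: "real \<Rightarrow> real"
  assumes "continuous_on {a..b} h" "set_integrable lborel {a..b} f"
  shows "set_integrable lborel {a..b} (\<lambda>x. h x * f x)"
proof -
  obtain C where C: "\<And>x. x \<in> {a..b} \<Longrightarrow> \<bar>h x\<bar> \<le> C"
    using compact_imp_bounded[OF compact_continuous_image[OF assms(1) compact_Icc]]
    unfolding bounded_iff by fastforce
  have "(\<lambda>x. (indicator {a..b} x *\<^sub>R h x) * (indicator {a..b} x *\<^sub>R f x)) \<in> borel_measurable borel"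
    using borel_measurable_continuous_on_indicator[OF _ assms(1)] assms(2)
    unfolding set_integrable_def by (simp add: borel_measurable_integrable)
  moreover have "(\<lambda>x. (indicator {a..b} x *\<^sub>R h x) * (indicator {a..b} x *\<^sub>R f x))
      = (\<lambda>x. indicator {a..b} x *\<^sub>R (h x * f x))"
    by (auto simp: indicator_def fun_eq_iff)
  ultimately have meas: "set_borel_measurable lborel {a..b} (\<lambda>x. h x * f x)"
    unfolding set_borel_measurable_def by simp
  have bound: "AE x in lborel. x \<in> {a..b} \<longrightarrow> norm (h x * f x) \<le> norm (C * \<bar>f x\<bar>)"
    using mult_right_mono[OF order_trans[OF C abs_ge_self] abs_ge_zero]
    by (intro AE_I2) (simp add: abs_mult)
  have "set_integrable lborel {a..b} (\<lambda>x. C * \<bar>f x\<bar>)"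
    using assms(2) by (simp add: set_integrable_abs)
  from set_integrable_bound[OF this meas bound] show ?thesis .
qed

text \<open>At the common zero the quotient is \<open>0/0 = 0\<close>, which is also its limit.\<close>
lemma isCont_square_mult_div_at_common_zero:
  fixes \<psi> Q A :: "real \<Rightarrow> real"
  assumes "(\<psi> has_real_derivative \<psi>') (at z)" "\<psi> z = 0"
    and "(Q has_real_derivative Q') (at z)" "Q' \<noteq> 0" "Q z = 0"
    and "isCont A z"
  shows "isCont (\<lambda>x. (\<psi> x)\<^sup>2 * A x / Q x) z"
proof -
  have quotients: "((\<lambda>y. (\<psi> y / (y - z)) / (Q y / (y - z))) \<longlongrightarrow> \<psi>' / Q') (at z)"
    using assms(1-5) by (intro tendsto_divide) (simp_all add: has_field_derivative_iff)
  have "eventually (\<lambda>y. (\<psi> y / (y - z)) / (Q y / (y - z)) = \<psi> y / Q y) (at z)"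
    unfolding eventually_at_filter by (auto intro!: always_eventually)
  from tendsto_cong[OF this] quotients have "((\<lambda>y. \<psi> y / Q y) \<longlongrightarrow> \<psi>' / Q') (at z)"
    by simp
  moreover have "(\<psi> \<longlongrightarrow> 0) (at z)" "(A \<longlongrightarrow> A z) (at z)"
    using DERIV_isCont[OF assms(1)] assms(2,6) by (simp_all add: isCont_def)
  ultimately have "((\<lambda>y. \<psi> y * A y * (\<psi> y / Q y)) \<longlongrightarrow> 0 * A z * (\<psi>' / Q')) (at z)"
    by (intro tendsto_mult)
  moreover have "(\<lambda>y. \<psi> y * A y * (\<psi> y / Q y)) = (\<lambda>x. (\<psi> x)\<^sup>2 * A x / Q x)"
    by (simp add: fun_eq_iff power2_eq_square)
  ultimately show ?thesis
    using assms(2) by (simp add: isCont_def)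
qed

lemma has_integral_square_quotient_derivative_Icc:
  fixes \<psi> A Q \<psi>' A' Q' :: "real \<Rightarrow> real"
  assumes "a \<le> z" "z \<le> b"
    and \<psi>: "\<And>x. x \<in> {a..b} \<Longrightarrow> (\<psi> has_real_derivative \<psi>' x) (at x)" and "\<psi> z = 0"
    and A: "\<And>x. x \<in> {a..b} \<Longrightarrow> (A has_real_derivative A' x) (at x)"
    and Q: "\<And>x. x \<in> {a..b} \<Longrightarrow> (Q has_real_derivative Q' x) (at x)"
    and "Q z = 0" "Q' z \<noteq> 0" and Q_nonzero: "\<And>x. x \<in> {a..b} \<Longrightarrow> x \<noteq> z \<Longrightarrow> Q x \<noteq> 0"
  shows "((\<lambda>x. 2 * \<psi> x * \<psi>' x * A x / Q x + (\<psi> x)\<^sup>2 * A' x / Q x - (\<psi> x)\<^sup>2 * A x * Q' x / (Q x)\<^sup>2)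
           has_integral ((\<psi> b)\<^sup>2 * A b / Q b - (\<psi> a)\<^sup>2 * A a / Q a)) {a..b}"
proof -
  define K where "K x = (\<psi> x)\<^sup>2 * A x / Q x" for x
  define K' where "K' x = 2 * \<psi> x * \<psi>' x * A x / Q x + (\<psi> x)\<^sup>2 * A' x / Q x
      - (\<psi> x)\<^sup>2 * A x * Q' x / (Q x)\<^sup>2" for x
  have z: "z \<in> {a..b}" using assms(1,2) by simp
  have K_deriv: "(K has_real_derivative K' x) (at x)" if x: "x \<in> {a..b}" "x \<noteq> z" for x
  proof -
    have "((\<lambda>y. (\<psi> y)\<^sup>2 * A y) has_real_derivative 2 * \<psi> x * \<psi>' x * A x + (\<psi> x)\<^sup>2 * A' x) (at x)"
      using DERIV_mult[OF DERIV_power[OF \<psi>[OF x(1)], of 2] A[OF x(1)]] by (simp add: mult_ac)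
    from DERIV_divide[OF this Q[OF x(1)] Q_nonzero[OF x]] show ?thesis
      unfolding K_def[abs_def] K'_def
      by (rule DERIV_cong) (use Q_nonzero[OF x] in \<open>simp add: field_simps power2_eq_square\<close>)
  qed
  have "isCont K x" if x: "x \<in> {a..b}" for x
  proof (cases "x = z")
    case True
    then show ?thesis
      unfolding K_def[abs_def]
      using isCont_square_mult_div_at_common_zero[OF \<psi>[OF z] \<open>\<psi> z = 0\<close> Q[OF z] \<open>Q' z \<noteq> 0\<close>
          \<open>Q z = 0\<close> DERIV_isCont[OF A[OF z]]] by simp
  next
    case False
    then show ?thesis using DERIV_isCont[OF K_deriv[OF x False]] by simp
  qed
  then have K_cont: "continuous_on {a..b} K" by (intro continuous_at_imp_continuous_on) auto
  have "(K' has_integral (K b - K a)) {a..b}"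
  proof (rule fundamental_theorem_of_calculus_interior_strong[of "{z}"])
    fix x assume "x \<in> {a<..<b} - {z}"
    then show "(K has_vector_derivative K' x) (at x)"
      using K_deriv[of x] by (simp add: has_real_derivative_iff_has_vector_derivative)
  qed (use assms(1,2) K_cont in auto)
  then show ?thesis by (simp add: K_def K'_def[abs_def])
qed

lemma DERIV_pos_imp_sign_Icc:
  fixes Q Q' :: "real \<Rightarrow> real"
  assumes Q: "\<And>x. x \<in> {a..b} \<Longrightarrow> (Q has_real_derivative Q' x) (at x)"
    and Q'_pos: "\<And>x. x \<in> {a..b} \<Longrightarrow> 0 < Q' x"
    and "z \<in> {a..b}" "Q z = 0" "x \<in> {a..b}"
  shows "x < z \<Longrightarrow> Q x < 0" and "z < x \<Longrightarrow> 0 < Q x"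
proof -
  have Q_less: "Q s < Q t" if "s \<in> {a..b}" "t \<in> {a..b}" "s < t" for s t
  proof (rule DERIV_pos_imp_increasing[OF that(3)])
    fix y assume "s \<le> y" "y \<le> t"
    then have "y \<in> {a..b}" using that by simp
    then show "\<exists>d. (Q has_real_derivative d) (at y) \<and> 0 < d" using Q Q'_pos by blast
  qed
  show "x < z \<Longrightarrow> Q x < 0" and "z < x \<Longrightarrow> 0 < Q x"
    using Q_less[of x z] Q_less[of z x] assms(3-5) by simp_all
qed

lemma weighted_poincare_Icc_set_integral:
  fixes P Q f \<phi> :: "real \<Rightarrow> real"
  assumes "a \<le> z" "z \<le> b"
    and \<phi>: "\<And>x. x \<in> {a..b} \<Longrightarrow> (\<phi> has_real_derivative deriv \<phi> x) (at x)"
    and Q: "\<And>x. x \<in> {a..b} \<Longrightarrow> (Q has_real_derivative deriv Q x) (at x)"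
    and Q'_pos: "\<And>x. x \<in> {a..b} \<Longrightarrow> 0 < deriv Q x"
    and "Q z = 0"
    and P_nonneg: "\<And>x. x \<in> {a..b} \<Longrightarrow> 0 \<le> P x"
    and f_nonneg: "\<And>x. x \<in> {a..b} \<Longrightarrow> 0 \<le> f x"
    and flux: "\<And>x. x \<in> {a..b} \<Longrightarrow> ((\<lambda>y. P y * f y) has_real_derivative - (Q x * f x)) (at x)"
    and G1_int: "set_integrable lborel {a..b} (\<lambda>x. (\<phi> x - \<phi> z)\<^sup>2 * f x)"
    and G2_int: "set_integrable lborel {a..b} (\<lambda>x. P x / deriv Q x * (deriv \<phi> x)\<^sup>2 * f x)"
  shows "(LINT x:{a..b}|lborel. (\<phi> x - \<phi> z)\<^sup>2 * f x)
         \<le> (LINT x:{a..b}|lborel. P x / deriv Q x * (deriv \<phi> x)\<^sup>2 * f x)"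
proof -
  define \<psi> where "\<psi> x = \<phi> x - \<phi> z" for x
  define K' where "K' x = 2 * \<psi> x * deriv \<phi> x * (P x * f x) / Q x + (\<psi> x)\<^sup>2 * - (Q x * f x) / Q x
      - (\<psi> x)\<^sup>2 * (P x * f x) * deriv Q x / (Q x)\<^sup>2" for x
    \<comment> \<open>the derivative of \<open>\<psi>\<^sup>2 P f / Q\<close> away from \<open>z\<close>\<close>
  let ?G1 = "\<lambda>x. (\<phi> x - \<phi> z)\<^sup>2 * f x"
  let ?G2 = "\<lambda>x. P x / deriv Q x * (deriv \<phi> x)\<^sup>2 * f x"
  have ends: "a \<in> {a..b}" "b \<in> {a..b}" "z \<in> {a..b}" using assms(1,2) by simp_all
  have Q_neg: "Q x < 0" if "x \<in> {a..b}" "x < z" for x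
    using Q Q'_pos ends(3) \<open>Q z = 0\<close> that by (rule DERIV_pos_imp_sign_Icc(1))
  have Q_pos: "0 < Q x" if "x \<in> {a..b}" "z < x" for x
    using Q Q'_pos ends(3) \<open>Q z = 0\<close> that by (rule DERIV_pos_imp_sign_Icc(2))
  have Q_nonzero: "Q x \<noteq> 0" if "x \<in> {a..b}" "x \<noteq> z" for x
    using Q_neg[OF that(1)] Q_pos[OF that(1)] that(2) by (cases "x < z") auto
  have \<psi>: "(\<psi> has_real_derivative deriv \<phi> x) (at x)" if "x \<in> {a..b}" for x
    unfolding \<psi>_def[abs_def] using DERIV_diff[OF \<phi>[OF that] DERIV_const[of "\<phi> z"]] by simp
  have flux_int: "(K' has_integral ((\<psi> b)\<^sup>2 * (P b * f b) / Q b - (\<psi> a)\<^sup>2 * (P a * f a) / Q a)) {a..b}"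
    unfolding K'_def
    using has_integral_square_quotient_derivative_Icc[OF assms(1,2) \<psi> _ flux Q \<open>Q z = 0\<close> _ Q_nonzero]
      Q'_pos[of z] assms(1,2) by (simp add: \<psi>_def)
  have "0 \<le> (\<psi> b)\<^sup>2 * (P b * f b) / Q b"
    using P_nonneg[OF ends(2)] f_nonneg[OF ends(2)] Q_pos[OF ends(2)] \<open>Q z = 0\<close> assms(2)
    by (cases "z = b") simp_all
  moreover have "(\<psi> a)\<^sup>2 * (P a * f a) / Q a \<le> 0"
    using P_nonneg[OF ends(1)] f_nonneg[OF ends(1)] Q_neg[OF ends(1)] \<open>Q z = 0\<close> assms(1)
    by (cases "a = z") (simp_all add: divide_nonneg_nonpos)
  moreover have pointwise: "?G1 x \<le> ?G2 x - K' x" if x: "x \<in> {a..b}" for x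
  proof -
    have "(\<psi> x)\<^sup>2 * - (Q x * f x) / Q x = - ((\<psi> x)\<^sup>2 * f x)"
      using Q_nonzero[OF x] by (cases "x = z") (auto simp: \<psi>_def)
    moreover have "?G1 x = (\<psi> x)\<^sup>2 * f x" "?G2 x = P x * f x / deriv Q x * (deriv \<phi> x)\<^sup>2"
      by (simp_all add: \<psi>_def mult_ac)
    moreover have "2 * \<psi> x * deriv \<phi> x * (P x * f x) / Q x - (\<psi> x)\<^sup>2 * (P x * f x) * deriv Q x / (Q x)\<^sup>2
        \<le> P x * f x / deriv Q x * (deriv \<phi> x)\<^sup>2"
      using P_nonneg[OF x] f_nonneg[OF x] Q'_pos[OF x] by (intro weighted_square_completion) simp_all
    ultimately show ?thesis
      unfolding K'_def by linarith
  qed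
  moreover have "(LINT x:{a..b}|lborel. ?G1 x)
      \<le> (LINT x:{a..b}|lborel. ?G2 x) - ((\<psi> b)\<^sup>2 * (P b * f b) / Q b - (\<psi> a)\<^sup>2 * (P a * f a) / Q a)"
  proof (rule has_integral_le[OF _ has_integral_diff[OF _ flux_int]])
    show "(?G1 has_integral (LINT x:{a..b}|lborel. ?G1 x)) {a..b}"
      using set_borel_integral_eq_integral[OF G1_int] by (simp add: integrable_integral)
    show "(?G2 has_integral (LINT x:{a..b}|lborel. ?G2 x)) {a..b}"
      using set_borel_integral_eq_integral[OF G2_int] by (simp add: integrable_integral)
  qed (rule pointwise)
  ultimately show ?thesis by linarith
qed

lemma weighted_poincare_Icc:
  fixes P Q f \<phi> :: "real \<Rightarrow> real"
  assumes "a \<le> z" "z \<le> b"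
    and \<phi>: "\<And>x. x \<in> {a..b} \<Longrightarrow> (\<phi> has_real_derivative deriv \<phi> x) (at x)"
    and \<phi>'_cont: "\<And>x. x \<in> {a..b} \<Longrightarrow> isCont (deriv \<phi>) x"
    and Q: "\<And>x. x \<in> {a..b} \<Longrightarrow> (Q has_real_derivative deriv Q x) (at x)"
    and Q'_cont: "\<And>x. x \<in> {a..b} \<Longrightarrow> isCont (deriv Q) x"
    and Q'_pos: "\<And>x. x \<in> {a..b} \<Longrightarrow> 0 < deriv Q x"
    and "Q z = 0"
    and P_cont: "\<And>x. x \<in> {a..b} \<Longrightarrow> isCont P x"
    and P_nonneg: "\<And>x. x \<in> {a..b} \<Longrightarrow> 0 \<le> P x"
    and f_nonneg: "\<And>x. x \<in> {a..b} \<Longrightarrow> 0 \<le> f x"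
    and f_int: "set_integrable lborel {a..b} f"
    and flux: "\<And>x. x \<in> {a..b} \<Longrightarrow> ((\<lambda>y. P y * f y) has_real_derivative - (Q x * f x)) (at x)"
  shows "(\<integral>\<^sup>+x\<in>{a..b}. ennreal ((\<phi> x - \<phi> z)\<^sup>2 * f x) \<partial>lborel)
         \<le> (\<integral>\<^sup>+x\<in>{a..b}. ennreal (P x / deriv Q x * (deriv \<phi> x)\<^sup>2 * f x) \<partial>lborel)"
proof -
  let ?G1 = "\<lambda>x. (\<phi> x - \<phi> z)\<^sup>2 * f x"
  let ?G2 = "\<lambda>x. P x / deriv Q x * (deriv \<phi> x)\<^sup>2 * f x"
  have "continuous_on {a..b} (\<lambda>x. (\<phi> x - \<phi> z)\<^sup>2)"
    using DERIV_isCont[OF \<phi>] by (intro continuous_at_imp_continuous_on ballI continuous_intros) auto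
  then have G1_int: "set_integrable lborel {a..b} ?G1"
    by (rule set_integrable_continuous_mult_Icc[OF _ f_int])
  have "isCont (\<lambda>x. P x / deriv Q x * (deriv \<phi> x)\<^sup>2) x" if x: "x \<in> {a..b}" for x
    using P_cont[OF x] Q'_cont[OF x] \<phi>'_cont[OF x] Q'_pos[OF x] by (intro continuous_intros) auto
  then have G2_int: "set_integrable lborel {a..b} ?G2"
    by (intro set_integrable_continuous_mult_Icc[OF _ f_int] continuous_at_imp_continuous_on) auto
  have "(\<integral>\<^sup>+x\<in>{a..b}. ennreal (?G1 x) \<partial>lborel) = ennreal (LINT x:{a..b}|lborel. ?G1 x)"
    by (rule set_integrable_nn_set_integral_eq[OF G1_int]) (use f_nonneg in simp_all)
  also have "\<dots> \<le> ennreal (LINT x:{a..b}|lborel. ?G2 x)"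
    by (intro ennreal_leI weighted_poincare_Icc_set_integral[OF assms(1,2) \<phi> Q Q'_pos \<open>Q z = 0\<close>
          P_nonneg f_nonneg flux G1_int G2_int])
  also have "\<dots> = (\<integral>\<^sup>+x\<in>{a..b}. ennreal (?G2 x) \<partial>lborel)"
    by (rule set_integrable_nn_set_integral_eq[OF G2_int, symmetric])
      (use P_nonneg Q'_pos f_nonneg in \<open>simp_all add: less_imp_le\<close>)
  finally show ?thesis .
qed

lemma nn_set_integral_einterval_le:
  fixes g :: "real \<Rightarrow> ennreal" and a b :: ereal
  assumes z: "a < ereal z" "ereal z < b"
    and meas: "(\<lambda>x. g x * indicator (einterval a b) x) \<in> borel_measurable lborel"
    and bound: "\<And>l u. a < ereal l \<Longrightarrow> l \<le> z \<Longrightarrow> z \<le> u \<Longrightarrow> ereal u < b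
                  \<Longrightarrow> (\<integral>\<^sup>+x\<in>{l..u}. g x \<partial>lborel) \<le> C"
  shows "(\<integral>\<^sup>+x\<in>einterval a b. g x \<partial>lborel) \<le> C"
proof -
  obtain l u :: "nat \<Rightarrow> real" where approx: "einterval a b = (\<Union>i. {l i .. u i})"
    "incseq u" "decseq l" "\<And>i. l i < u i" "\<And>i. a < l i" "\<And>i. u i < b"
    "l \<longlonglongrightarrow> a" "u \<longlonglongrightarrow> b"
    by (rule einterval_Icc_approximation[OF order.strict_trans[OF z]], rule that)
  define lo hi where "lo i = min (l i) z" and "hi i = max (u i) z" for i
  define F where "F i x = g x * indicator {lo i..hi i} x" for i x
  have lo: "a < ereal (lo i)" "lo i \<le> z" and hi: "ereal (hi i) < b" "z \<le> hi i" for i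
    using approx(5,6)[of i] z by (simp_all add: lo_def hi_def min_def max_def)
  have Icc_sub: "{lo i..hi i} \<subseteq> einterval a b" for i
  proof
    fix x assume "x \<in> {lo i..hi i}"
    then have "ereal (lo i) \<le> ereal x" "ereal x \<le> ereal (hi i)" by simp_all
    then show "x \<in> einterval a b"
      using order.strict_trans2[OF lo(1)] order.strict_trans1[OF _ hi(1)] by (simp add: einterval_def)
  qed
  have Icc_mono: "{lo i..hi i} \<subseteq> {lo j..hi j}" if "i \<le> j" for i j
  proof -
    have "l j \<le> l i" "u i \<le> u j" using approx(2,3) that by (simp_all add: incseq_def decseq_def)
    then show ?thesis by (auto simp: lo_def hi_def)
  qed
  then have "incseq F"
    unfolding incseq_def le_fun_def F_def
    by (intro allI impI mult_left_mono indicator_leI) (auto dest: Icc_mono)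
  moreover have "F i \<in> borel_measurable lborel" for i
  proof -
    have "F i = (\<lambda>x. (g x * indicator (einterval a b) x) * indicator {lo i..hi i} x)"
      using Icc_sub[of i] by (auto simp: F_def fun_eq_iff split: split_indicator)
    then show ?thesis using meas by simp
  qed
  moreover have "(SUP i. F i x) = g x * indicator (einterval a b) x" for x
  proof (cases "x \<in> einterval a b")
    case True
    then obtain j where "x \<in> {l j..u j}" using approx(1) by auto
    then have "F j x = g x" by (simp add: F_def lo_def hi_def min_le_iff_disj le_max_iff_disj)
    moreover have "F i x \<le> g x" for i by (simp add: F_def indicator_def)
    ultimately have "(SUP i. F i x) = g x"
      by (metis (mono_tags) SUP_upper2 SUP_least UNIV_I antisym order_refl)
    then show ?thesis using True by simp
  next
    case False
    then have "x \<notin> {lo i..hi i}" for i using Icc_sub[of i] by blast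
    then have "F i x = 0" for i by (simp add: F_def)
    then show ?thesis using False by simp
  qed
  ultimately have "(\<integral>\<^sup>+x\<in>einterval a b. g x \<partial>lborel) = (SUP i. integral\<^sup>N lborel (F i))"
    using nn_integral_monotone_convergence_SUP[of F lborel] by simp
  also have "\<dots> \<le> C"
    unfolding F_def using lo hi by (intro SUP_least bound)
  finally show ?thesis .
qed

lemma weighted_poincare_einterval:
  fixes P Q f \<phi> :: "real \<Rightarrow> real" and a b :: ereal
  assumes z: "z \<in> einterval a b" "Q z = 0"
    and \<phi>: "\<And>x. x \<in> einterval a b \<Longrightarrow> (\<phi> has_real_derivative deriv \<phi> x) (at x)"
    and \<phi>'_cont: "\<And>x. x \<in> einterval a b \<Longrightarrow> isCont (deriv \<phi>) x"
    and Q: "\<And>x. x \<in> einterval a b \<Longrightarrow> (Q has_real_derivative deriv Q x) (at x)"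
    and Q'_cont: "\<And>x. x \<in> einterval a b \<Longrightarrow> isCont (deriv Q) x"
    and Q'_pos: "\<And>x. x \<in> einterval a b \<Longrightarrow> 0 < deriv Q x"
    and P_cont: "\<And>x. x \<in> einterval a b \<Longrightarrow> isCont P x"
    and P_nonneg: "\<And>x. x \<in> einterval a b \<Longrightarrow> 0 \<le> P x"
    and f_nonneg: "\<And>x. x \<in> einterval a b \<Longrightarrow> 0 \<le> f x"
    and f_int: "set_integrable lborel (einterval a b) f"
    and flux: "\<And>x. x \<in> einterval a b \<Longrightarrow> ((\<lambda>y. P y * f y) has_real_derivative - (Q x * f x)) (at x)"
    and G1_int: "set_integrable lborel (einterval a b) (\<lambda>x. (\<phi> x - \<phi> z)\<^sup>2 * f x)"
  shows "(\<integral>\<^sup>+x\<in>einterval a b. ennreal ((\<phi> x - \<phi> z)\<^sup>2 * f x) \<partial>lborel)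
         \<le> (\<integral>\<^sup>+x\<in>einterval a b. ennreal (P x / deriv Q x * (deriv \<phi> x)\<^sup>2 * f x) \<partial>lborel)"
proof (rule nn_set_integral_einterval_le)
  let ?I = "einterval a b"
  let ?G1 = "\<lambda>x. (\<phi> x - \<phi> z)\<^sup>2 * f x"
  show "a < ereal z" "ereal z < b" using z(1) by (simp_all add: einterval_def)
  have "(\<lambda>x. indicator ?I x *\<^sub>R ?G1 x) \<in> borel_measurable lborel"
    using G1_int unfolding set_integrable_def by (rule borel_measurable_integrable)
  then have "(\<lambda>x. ennreal (indicator ?I x *\<^sub>R ?G1 x)) \<in> borel_measurable lborel"
    by measurable
  moreover have "(\<lambda>x. ennreal (indicator ?I x *\<^sub>R ?G1 x)) = (\<lambda>x. ennreal (?G1 x) * indicator ?I x)"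
    by (auto simp: indicator_def fun_eq_iff)
  ultimately show "(\<lambda>x. ennreal (?G1 x) * indicator ?I x) \<in> borel_measurable lborel"
    by simp
  fix l u assume lu: "a < ereal l" "l \<le> z" "z \<le> u" "ereal u < b"
  have sub: "{l..u} \<subseteq> ?I"
  proof
    fix x assume "x \<in> {l..u}"
    then show "x \<in> ?I"
      using order.strict_trans2[OF lu(1), of "ereal x"] order.strict_trans1[OF _ lu(4), of "ereal x"]
      by (simp add: einterval_def)
  qed
  note on_Icc = subsetD[OF sub]
  have "set_integrable lborel {l..u} f"
    by (rule set_integrable_subset[OF f_int _ sub]) simp
  have "(\<integral>\<^sup>+x\<in>{l..u}. ennreal (?G1 x) \<partial>lborel)
      \<le> (\<integral>\<^sup>+x\<in>{l..u}. ennreal (P x / deriv Q x * (deriv \<phi> x)\<^sup>2 * f x) \<partial>lborel)"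
    by (rule weighted_poincare_Icc[OF lu(2,3) \<phi>[OF on_Icc] \<phi>'_cont[OF on_Icc] Q[OF on_Icc]
          Q'_cont[OF on_Icc] Q'_pos[OF on_Icc] z(2) P_cont[OF on_Icc] P_nonneg[OF on_Icc]
          f_nonneg[OF on_Icc] \<open>set_integrable lborel {l..u} f\<close> flux[OF on_Icc]])
  also have "\<dots> \<le> (\<integral>\<^sup>+x\<in>?I. ennreal (P x / deriv Q x * (deriv \<phi> x)\<^sup>2 * f x) \<partial>lborel)"
    using sub by (rule nn_set_integral_set_mono)
  finally show "(\<integral>\<^sup>+x\<in>{l..u}. ennreal (?G1 x) \<partial>lborel)
      \<le> (\<integral>\<^sup>+x\<in>?I. ennreal (P x / deriv Q x * (deriv \<phi> x)\<^sup>2 * f x) \<partial>lborel)" .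
qed

lemma ointerval_eq_einterval: "ointerval a b = einterval a b"
  by (simp add: ointerval_def einterval_def)

lemma connected_ointerval: "connected (ointerval a b)"
  unfolding connected_iff_interval
proof (intro ballI allI impI)
  fix x y z assume "x \<in> ointerval a b" "y \<in> ointerval a b" "x \<le> z" "z \<le> y"
  then have "a < ereal x" "ereal x \<le> ereal z" "ereal z \<le> ereal y" "ereal y < b"
    by (simp_all add: ointerval_def)
  then show "z \<in> ointerval a b"
    using order.strict_trans2[of a "ereal x" "ereal z"] order.strict_trans1[of "ereal z" "ereal y" b]
    by (simp add: ointerval_def)
qed

lemma eventually_left_end_in_ointerval:
  assumes "im < ip"
  shows "eventually (\<lambda>x. x \<in> ointerval im ip) (left_end im)"
proof -
  obtain c where c: "im < ereal c" "ereal c < ip"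
    using einterval_nonempty[OF assms] by (auto simp: einterval_def)
  show ?thesis
  proof (cases im)
    case (real r)
    then have "r < c" using c by simp
    have "eventually (\<lambda>x. x \<in> ointerval im ip) (at_right r)"
      by (rule eventually_at_rightI[OF _ \<open>r < c\<close>])
        (use c real in \<open>auto simp: ointerval_def intro: order.strict_trans[of _ "ereal c"]\<close>)
    then show ?thesis using real by (simp add: left_end_def)
  next
    case MInf
    have "eventually (\<lambda>x. x \<in> ointerval im ip) at_bot"
      unfolding eventually_at_bot_dense using c MInf
      by (intro exI[of _ c]) (auto simp: ointerval_def intro: order.strict_trans[of _ "ereal c"])
    then show ?thesis using MInf by (simp add: left_end_def)
  qed (use assms in simp)
qed

lemma eventually_right_end_in_ointerval:
  assumes "im < ip"
  shows "eventually (\<lambda>x. x \<in> ointerval im ip) (right_end ip)"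
proof -
  obtain c where c: "im < ereal c" "ereal c < ip"
    using einterval_nonempty[OF assms] by (auto simp: einterval_def)
  show ?thesis
  proof (cases ip)
    case (real r)
    then have "c < r" using c by simp
    have "eventually (\<lambda>x. x \<in> ointerval im ip) (at_left r)"
      by (rule eventually_at_leftI[OF _ \<open>c < r\<close>])
        (use c real in \<open>auto simp: ointerval_def intro: order.strict_trans[of _ "ereal c"]\<close>)
    then show ?thesis using real by (simp add: right_end_def)
  next
    case PInf
    have "eventually (\<lambda>x. x \<in> ointerval im ip) at_top"
      unfolding eventually_at_top_dense using c PInf
      by (intro exI[of _ c]) (auto simp: ointerval_def intro: order.strict_trans[of _ "ereal c"])
    then show ?thesis using PInf by (simp add: right_end_def)
  qed (use assms in simp)
qed

lemma ointerval_zero_exists: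
  fixes Q :: "real \<Rightarrow> real"
  assumes "im < ip" "continuous_on (ointerval im ip) Q"
    and "((\<lambda>x. ereal (Q x)) \<longlongrightarrow> L) (left_end im)" "L < 0"
    and "((\<lambda>x. ereal (Q x)) \<longlongrightarrow> R) (right_end ip)" "0 < R"
  shows "\<exists>z\<in>ointerval im ip. Q z = 0"
proof -
  have "left_end im \<noteq> bot" "right_end ip \<noteq> bot"
    by (simp_all add: left_end_def right_end_def)
  have "eventually (\<lambda>x. x \<in> ointerval im ip \<and> Q x < 0) (left_end im)"
    using eventually_left_end_in_ointerval[OF assms(1)] order_tendstoD(2)[OF assms(3,4)]
    by eventually_elim simp
  from eventually_happens'[OF \<open>left_end im \<noteq> bot\<close> this]
  obtain a where a: "a \<in> ointerval im ip" "Q a < 0" by blast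
  have "eventually (\<lambda>x. x \<in> ointerval im ip \<and> 0 < Q x) (right_end ip)"
    using eventually_right_end_in_ointerval[OF assms(1)] order_tendstoD(1)[OF assms(5,6)]
    by eventually_elim simp
  from eventually_happens'[OF \<open>right_end ip \<noteq> bot\<close> this]
  obtain b where b: "b \<in> ointerval im ip" "0 < Q b" by blast
  have "connected (Q ` ointerval im ip)"
    using assms(2) connected_ointerval by (rule connected_continuous_image)
  then have "0 \<in> Q ` ointerval im ip"
    by (rule connectedD_interval[OF _ imageI[OF a(1)] imageI[OF b(1)]]) (use a b in simp_all)
  then show ?thesis by auto
qed

lemma smooth_on_imp_DERIV:
  assumes "smooth_on S F" "x \<in> S"
  shows "(F has_real_derivative deriv F x) (at x)"
proof -
  have "(deriv ^^ 0) F differentiable (at x)" using assms unfolding smooth_on_def by blast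
  then show ?thesis by (simp add: DERIV_deriv_iff_real_differentiable)
qed

lemma smooth_on_imp_isCont_deriv:
  assumes "smooth_on S F" "x \<in> S"
  shows "isCont (deriv F) x"
proof -
  have "(deriv ^^ 1) F differentiable (at x)" using assms unfolding smooth_on_def by blast
  then show ?thesis by (simp add: differentiable_imp_continuous_within)
qed

theorem theorem2p1:
  fixes im ip :: ereal and P Q f \<phi> :: "real \<Rightarrow> real"
  assumes "im < ip"
    and "smooth_on (ointerval im ip) P" and "smooth_on (ointerval im ip) Q"
    and "\<forall>x\<in>ointerval im ip. P x \<ge> 0"
    and "strict_mono_on (ointerval im ip) Q"
    and "\<forall>x\<in>ointerval im ip. deriv Q x > 0"
    and "\<exists>L. L < 0 \<and> ((\<lambda>x. ereal (Q x)) \<longlongrightarrow> L) (left_end im)"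
    and "\<exists>R. R > 0 \<and> ((\<lambda>x. ereal (Q x)) \<longlongrightarrow> R) (right_end ip)"
    and "\<forall>x\<in>ointerval im ip. f x \<ge> 0"
    and "set_integrable lborel (ointerval im ip) f"
    and "(\<integral>x\<in>ointerval im ip. f x \<partial>lborel) = 1"
    and "\<forall>x\<in>ointerval im ip.
           ((\<lambda>y. P y * f y) has_real_derivative (- (Q x * f x))) (at x)"
    and "smooth_on (ointerval im ip) \<phi>"
    and "set_integrable lborel (ointerval im ip) (\<lambda>x. (\<phi> x)\<^sup>2 * f x)"
  shows "ennreal ((\<integral>x\<in>ointerval im ip. (\<phi> x)\<^sup>2 * f x \<partial>lborel)
                   - (\<integral>x\<in>ointerval im ip. \<phi> x * f x \<partial>lborel)\<^sup>2)
         \<le> (\<integral>\<^sup>+x\<in>ointerval im ip.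
               ennreal ((P x / deriv Q x) * (deriv \<phi> x)\<^sup>2 * f x) \<partial>lborel)"
proof -
  let ?I = "ointerval im ip"
  have isCont_smooth: "isCont F x" if "smooth_on ?I F" "x \<in> ?I" for F x
    using DERIV_isCont[OF smooth_on_imp_DERIV[OF that]] .
  have "continuous_on ?I Q"
    using isCont_smooth[OF assms(3)] by (intro continuous_at_imp_continuous_on) auto
  then obtain z where z: "z \<in> ?I" "Q z = 0"
    using ointerval_zero_exists[OF assms(1)] assms(7,8) by blast
  have "continuous_on ?I \<phi>"
    using isCont_smooth[OF assms(13)] by (intro continuous_at_imp_continuous_on) auto
  then have "set_borel_measurable lborel ?I \<phi>"
    unfolding set_borel_measurable_def ointerval_eq_einterval
    using borel_measurable_continuous_on_indicator[of "einterval im ip" \<phi>] by simp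
  then have "set_integrable lborel ?I (\<lambda>x. \<phi> x * f x)"
    using assms(9) by (intro set_integrable_mult_of_square[OF _ assms(10,14)]) simp_all
  note moment = set_integral_variance_le_moment[OF assms(10,11,14) this, of "\<phi> z"]
  have "ennreal ((LINT x:?I|lborel. (\<phi> x)\<^sup>2 * f x) - (LINT x:?I|lborel. \<phi> x * f x)\<^sup>2)
      \<le> ennreal (LINT x:?I|lborel. (\<phi> x - \<phi> z)\<^sup>2 * f x)"
    using moment(2) by (rule ennreal_leI)
  also have "\<dots> = (\<integral>\<^sup>+x\<in>?I. ennreal ((\<phi> x - \<phi> z)\<^sup>2 * f x) \<partial>lborel)"
    by (rule set_integrable_nn_set_integral_eq[OF moment(1), symmetric])
      (use assms(9) in \<open>simp_all add: ointerval_eq_einterval\<close>)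
  also have "\<dots> \<le> (\<integral>\<^sup>+x\<in>?I. ennreal ((P x / deriv Q x) * (deriv \<phi> x)\<^sup>2 * f x) \<partial>lborel)"
    using z smooth_on_imp_DERIV[OF assms(13)] smooth_on_imp_isCont_deriv[OF assms(13)]
      smooth_on_imp_DERIV[OF assms(3)] smooth_on_imp_isCont_deriv[OF assms(3)]
      isCont_smooth[OF assms(2)] assms(4,6,9,10,12) moment(1)
    by (intro weighted_poincare_einterval[folded ointerval_eq_einterval]) simp_all
  finally show ?thesis .
qed

end
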